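(* Let $(A,\mathfrak m)$ be a local Prüfer ring which is not Gaussian and such that $\mathfrak m = Z(A)$, and let $I := \mathfrak m$. Then $A \bowtie I$ is a Prüfer ring and is not a Gaussian ring.
   Context: All rings are commutative with identity. For an ideal $I$ of a ring $A$, $A \bowtie I := \{(a, a+i) : a \in A, i \in I\}\subseteq A\times A$ (amalgamated duplication). $Z(A)$ is the set of zero-divisors of $A$. An ideal is regular if it contains a regular element. A ring $R$ is a Prüfer ring if every finitely generated regular ideal of $R$ is invertible. A ring $R$ is Gaussian if $c(gh)=c(g)c(h)$ for all $g,h\in R[x]$, where $c(p)$ is the ideal generated by the coefficients of $p$. *)

theory Defs
  imports "HOL-Algebra.Algebra"
begin

definition zero_divisors :: "('a, 'b) ring_scheme \<Rightarrow> 'a set" where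
  "zero_divisors R = {a \<in> carrier R. \<exists>b \<in> carrier R. b \<noteq> \<zero>\<^bsub>R\<^esub> \<and> a \<otimes>\<^bsub>R\<^esub> b = \<zero>\<^bsub>R\<^esub>}"

definition regular_elem :: "('a, 'b) ring_scheme \<Rightarrow> 'a \<Rightarrow> bool" where
  "regular_elem R s \<longleftrightarrow> s \<in> carrier R \<and> s \<notin> zero_divisors R"

definition regular_ideal :: "('a, 'b) ring_scheme \<Rightarrow> 'a set \<Rightarrow> bool" where
  "regular_ideal R I \<longleftrightarrow> ideal I R \<and> (\<exists>x \<in> I. regular_elem R x)"

definition fin_gen_ideal :: "('a, 'b) ring_scheme \<Rightarrow> 'a set \<Rightarrow> bool" where
  "fin_gen_ideal R I \<longleftrightarrow> (\<exists>S. finite S \<and> S \<subseteq> carrier R \<and> I = Idl\<^bsub>R\<^esub> S)"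

text \<open>Invertibility of an ideal I, i.e. I I^{-1} = R inside the total quotient ring T(R),
  where I^{-1} = {x \<in> T(R). x I \<subseteq> R}.  Written with a common regular denominator s:
  the ideal J = {a. \<forall>i\<in>I. a i \<in> sR} is s I^{-1} (intersected with R), and
  I I^{-1} = R  iff  I J = sR.\<close>
definition invertible_ideal :: "('a, 'b) ring_scheme \<Rightarrow> 'a set \<Rightarrow> bool" where
  "invertible_ideal R I \<longleftrightarrow>
     (\<exists>s. regular_elem R s \<and>
        I \<cdot>\<^bsub>R\<^esub> {a \<in> carrier R. \<forall>i \<in> I. a \<otimes>\<^bsub>R\<^esub> i \<in> PIdl\<^bsub>R\<^esub> s} = PIdl\<^bsub>R\<^esub> s)"

definition prufer_ring :: "('a, 'b) ring_scheme \<Rightarrow> bool" where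
  "prufer_ring R \<longleftrightarrow> cring R \<and>
     (\<forall>I. fin_gen_ideal R I \<and> regular_ideal R I \<longrightarrow> invertible_ideal R I)"

definition content_ideal :: "('a, 'b) ring_scheme \<Rightarrow> 'a list \<Rightarrow> 'a set" where
  "content_ideal R p = Idl\<^bsub>R\<^esub> (set p)"

definition gaussian_ring :: "('a, 'b) ring_scheme \<Rightarrow> bool" where
  "gaussian_ring R \<longleftrightarrow> cring R \<and>
     (\<forall>g \<in> carrier (univ_poly R (carrier R)). \<forall>h \<in> carrier (univ_poly R (carrier R)).
        content_ideal R (g \<otimes>\<^bsub>univ_poly R (carrier R)\<^esub> h)
          = content_ideal R g \<cdot>\<^bsub>R\<^esub> content_ideal R h)"

definition local_ring :: "('a, 'b) ring_scheme \<Rightarrow> 'a set \<Rightarrow> bool" where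
  "local_ring R m \<longleftrightarrow> cring R \<and> maximalideal m R \<and> (\<forall>M. maximalideal M R \<longrightarrow> M = m)"

definition amalg_dup :: "('a, 'b) ring_scheme \<Rightarrow> 'a set \<Rightarrow> ('a \<times> 'a) ring" where
  "amalg_dup R I = (RDirProd R R)
     \<lparr> carrier := {(a, a \<oplus>\<^bsub>R\<^esub> i) | a i. a \<in> carrier R \<and> i \<in> I} \<rparr>"

end

theory Submission
  imports Defs
begin

text \<open>
  Since \<open>m = Z(A)\<close>, every element of \<open>A\<close> is a unit or a zero divisor, and this persists in
  \<open>D = A \<bowtie> m\<close>: if \<open>(a, b) \<in> D\<close> with \<open>a \<notin> m\<close>, then also \<open>b \<notin> m\<close>, and \<open>(a\<inverse>, b\<inverse>)\<close> lies in \<open>D\<close>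
  because \<open>b\<inverse> - a\<inverse> = (a - b) a\<inverse> b\<inverse>\<close>; if \<open>a \<in> m\<close>, then \<open>(a, b)\<close> is killed by \<open>(z, z)\<close> or \<open>(0, z)\<close>
  for a suitable \<open>z \<noteq> 0\<close>.  So a regular ideal of \<open>D\<close> contains a unit, is all of \<open>D\<close>, and is
  trivially invertible: \<open>D\<close> is Pruefer.  On the other hand \<open>A\<close> is a retract of \<open>D\<close> via the
  diagonal \<open>a \<mapsto> (a, a)\<close> and the first projection, and a retract of a Gaussian ring is
  Gaussian, since contents of polynomials and products of ideals are transported along the
  retraction.
\<close>

lemma (in cring) ideal_le_maximalideal:
  assumes "ideal I R" and "\<one> \<notin> I"
  obtains M where "maximalideal M R" and "I \<subseteq> M"
proof -
  define S where "S = {J. ideal J R \<and> I \<subseteq> J \<and> \<one> \<notin> J}"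
  have "\<exists>M\<in>S. \<forall>J\<in>S. M \<subseteq> J \<longrightarrow> J = M"
  proof (rule subset_Zorn_nonempty)
    show "S \<noteq> {}" using assms unfolding S_def by blast
  next
    fix C assume C: "C \<noteq> {}" "subset.chain S C"
    have "subset.chain {J. ideal J R} C" using C(2) unfolding pred_on.chain_def S_def by auto
    from chain_Union_is_ideal[OF this] C(1) have "ideal (\<Union>C) R" by simp
    with C show "\<Union>C \<in> S" unfolding pred_on.chain_def S_def by blast
  qed
  then obtain M where M: "M \<in> S" and M_max: "\<And>J. J \<in> S \<Longrightarrow> M \<subseteq> J \<Longrightarrow> J = M" by blast
  have "maximalideal M R"
  proof (rule maximalidealI)
    show "ideal M R" and "carrier R \<noteq> M" using M unfolding S_def by auto
  next
    fix J assume J: "ideal J R" "M \<subseteq> J" "J \<subseteq> carrier R"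
    show "J = M \<or> J = carrier R"
    proof (cases "\<one> \<in> J")
      case True thus ?thesis using ideal.one_imp_carrier[OF J(1)] by blast
    next
      case False thus ?thesis using J M M_max unfolding S_def by blast
    qed
  qed
  with M that show ?thesis unfolding S_def by blast
qed

lemma (in cring) local_ring_Units_iff:
  assumes "local_ring R m" and "x \<in> carrier R"
  shows "x \<in> Units R \<longleftrightarrow> x \<notin> m"
proof -
  have m: "maximalideal m R" and unique: "\<And>M. maximalideal M R \<Longrightarrow> M = m"
    using assms(1) unfolding local_ring_def by auto
  interpret m: maximalideal m R by (rule m)
  show ?thesis
  proof
    assume "x \<in> Units R"
    then show "x \<notin> m" using m.I_notcarr m.one_imp_carrier m.I_l_closed[of x "inv x"] by auto
  next
    assume "x \<notin> m"
    show "x \<in> Units R"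
    proof (rule ccontr)
      assume "x \<notin> Units R"
      have "\<one> \<notin> PIdl x"
      proof
        assume "\<one> \<in> PIdl x"
        then obtain y where "y \<in> carrier R" "\<one> = y \<otimes> x" unfolding cgenideal_def by blast
        with assms(2) \<open>x \<notin> Units R\<close> show False unfolding Units_def using m_comm by force
      qed
      with cgenideal_ideal[OF assms(2)] obtain M where "maximalideal M R" "PIdl x \<subseteq> M"
        by (rule ideal_le_maximalideal)
      then show False using unique cgenideal_self[OF assms(2)] \<open>x \<notin> m\<close> by blast
    qed
  qed
qed

lemma (in cring) prufer_ringI_regular_Units:
  assumes "\<And>x. regular_elem R x \<Longrightarrow> x \<in> Units R"
  shows "prufer_ring R"
  unfolding prufer_ring_def
proof (intro conjI allI impI)
  show "cring R" by (rule is_cring)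
  fix I assume "fin_gen_ideal R I \<and> regular_ideal R I"
  then obtain x where I: "ideal I R" and x: "x \<in> I" "regular_elem R x"
    unfolding regular_ideal_def by blast
  have "x \<in> Units R" using assms x(2) .
  then have "\<one> \<in> I" using ideal.I_l_closed[OF I x(1), of "inv x"] by simp
  then have I_carrier: "I = carrier R" by (rule ideal.one_imp_carrier[OF I])
  have one_regular: "regular_elem R \<one>"
    unfolding regular_elem_def zero_divisors_def by auto
  have PIdl_one: "PIdl \<one> = carrier R"
    using ideal.one_imp_carrier[OF cgenideal_ideal cgenideal_self] by simp
  have "{a \<in> carrier R. \<forall>i \<in> carrier R. a \<otimes> i \<in> carrier R} = carrier R" by auto
  then have "carrier R \<cdot> {a \<in> carrier R. \<forall>i \<in> carrier R. a \<otimes> i \<in> PIdl \<one>} = PIdl \<one>"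
    unfolding PIdl_one using ideal_prod_one[OF oneideal] by simp
  with one_regular show "invertible_ideal R I"
    unfolding invertible_ideal_def I_carrier by blast
qed

lemma (in ring_hom_ring) image_ideal_prod:
  assumes "ideal I R" and "ideal J R"
  shows "h ` (I \<cdot>\<^bsub>R\<^esub> J) = h ` I \<cdot>\<^bsub>S\<^esub> h ` J"
proof
  show "h ` (I \<cdot>\<^bsub>R\<^esub> J) \<subseteq> h ` I \<cdot>\<^bsub>S\<^esub> h ` J"
  proof
    fix y assume "y \<in> h ` (I \<cdot>\<^bsub>R\<^esub> J)"
    then obtain z where z: "z \<in> I \<cdot>\<^bsub>R\<^esub> J" "y = h z" by blast
    from z(1) have "h z \<in> h ` I \<cdot>\<^bsub>S\<^esub> h ` J"
    proof (induct z rule: ideal_prod.induct)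
      case (prod i j)
      then have "h (i \<otimes> j) = h i \<otimes>\<^bsub>S\<^esub> h j" using assms by (simp add: ideal.Icarr)
      with prod show ?case by (simp add: ideal_prod.prod)
    next
      case (sum s1 s2)
      then have "h (s1 \<oplus> s2) = h s1 \<oplus>\<^bsub>S\<^esub> h s2"
        using R.ideal_prod_in_carrier[OF assms] by (simp add: subsetD)
      with sum show ?case by (simp add: ideal_prod.sum)
    qed
    with z(2) show "y \<in> h ` I \<cdot>\<^bsub>S\<^esub> h ` J" by simp
  qed
next
  show "h ` I \<cdot>\<^bsub>S\<^esub> h ` J \<subseteq> h ` (I \<cdot>\<^bsub>R\<^esub> J)"
  proof
    fix y assume "y \<in> h ` I \<cdot>\<^bsub>S\<^esub> h ` J"
    then show "y \<in> h ` (I \<cdot>\<^bsub>R\<^esub> J)"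
    proof (induct y rule: ideal_prod.induct)
      case (prod i j)
      then show ?case using assms by (force simp: ideal.Icarr intro: ideal_prod.prod)
    next
      case (sum s1 s2)
      then obtain t1 t2 where "t1 \<in> I \<cdot>\<^bsub>R\<^esub> J" "t2 \<in> I \<cdot>\<^bsub>R\<^esub> J" "s1 = h t1" "s2 = h t2"
        by blast
      moreover have "t1 \<in> carrier R" "t2 \<in> carrier R"
        using calculation(1,2) R.ideal_prod_in_carrier[OF assms] by auto
      ultimately have "s1 \<oplus>\<^bsub>S\<^esub> s2 = h (t1 \<oplus> t2)" "t1 \<oplus> t2 \<in> I \<cdot>\<^bsub>R\<^esub> J"
        by (simp_all add: ideal_prod.sum)
      then show ?case by blast
    qed
  qed
qed

lemma (in ring_hom_ring) retract_image_genideal: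
  assumes g: "g \<in> ring_hom S R" and retract: "\<And>a. a \<in> carrier R \<Longrightarrow> g (h a) = a"
    and T: "T \<subseteq> carrier R"
  shows "g ` (Idl\<^bsub>S\<^esub> (h ` T)) = Idl T"
proof -
  interpret g: ring_hom_ring S R g using g by unfold_locales
  have hT: "h ` T \<subseteq> carrier S" using T by auto
  have "Idl\<^bsub>S\<^esub> (h ` T) \<subseteq> {s \<in> carrier S. g s \<in> Idl T}"
    using T retract R.genideal_self[OF T]
    by (intro S.genideal_minimal g.ideal_vimage R.genideal_ideal) (auto simp: subset_iff)
  moreover have "Idl T \<subseteq> {r \<in> carrier R. h r \<in> Idl\<^bsub>S\<^esub> (h ` T)}"
    using T S.genideal_self[OF hT]
    by (intro R.genideal_minimal ideal_vimage S.genideal_ideal hT) auto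
  ultimately show ?thesis
    using retract R.genideal_ideal[OF T] ideal.Icarr by (force simp: image_iff)
qed

lemma (in ring_hom_ring) polynomial_map_inj:
  assumes "inj_on h (carrier R)" and "polynomial (carrier R) p"
  shows "polynomial\<^bsub>S\<^esub> (carrier S) (map h p)"
proof (cases p)
  case (Cons a q)
  with assms(2) have "a \<in> carrier R" "a \<noteq> \<zero>" "set p \<subseteq> carrier R" unfolding polynomial_def by auto
  moreover have "h a \<noteq> \<zero>\<^bsub>S\<^esub>"
    using calculation assms(1) inj_onD[of h "carrier R" a \<zero>] by auto
  ultimately show ?thesis using Cons unfolding polynomial_def by auto
qed (simp add: polynomial_def)

lemma (in ring_hom_ring) gaussian_ring_retract:
  assumes "cring R" and g: "g \<in> ring_hom S R" and retract: "\<And>a. a \<in> carrier R \<Longrightarrow> g (h a) = a"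
    and "gaussian_ring S"
  shows "gaussian_ring R"
proof -
  have map_polynomial: "polynomial\<^bsub>S\<^esub> (carrier S) (map h p)" if "polynomial (carrier R) p" for p
    using polynomial_map_inj[OF inj_on_inverseI[of _ g] that] retract by blast
  have content_retract: "g ` content_ideal S (map h p) = content_ideal R p" if "set p \<subseteq> carrier R" for p
    unfolding content_ideal_def using retract_image_genideal[OF g retract that] by simp
  have content_ideal: "ideal (content_ideal S (map h p)) S" if "set p \<subseteq> carrier R" for p
    unfolding content_ideal_def using that by (intro S.genideal_ideal) auto
  interpret g: ring_hom_ring S R g using g by unfold_locales
  show ?thesis
    unfolding gaussian_ring_def
  proof (intro conjI ballI)
    fix p q assume "p \<in> carrier (univ_poly R (carrier R))" "q \<in> carrier (univ_poly R (carrier R))"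
    then have p: "polynomial (carrier R) p" and q: "polynomial (carrier R) q"
      by (simp_all add: univ_poly_carrier)
    then have pq: "polynomial (carrier R) (R.poly_mult p q)"
      using R.poly_mult_closed[OF R.carrier_is_subring] by blast
    have "map h (R.poly_mult p q) = S.poly_mult (map h p) (map h q)"
      using poly_mult_hom'[OF R.polynomial_incl[OF p] R.polynomial_incl[OF q]]
        S.normalize_polynomial[OF map_polynomial[OF pq]] by simp
    then have "content_ideal S (map h (R.poly_mult p q))
        = content_ideal S (map h p) \<cdot>\<^bsub>S\<^esub> content_ideal S (map h q)"
      using \<open>gaussian_ring S\<close> map_polynomial[OF p] map_polynomial[OF q]
      unfolding gaussian_ring_def by (simp add: univ_poly_carrier univ_poly_mult)
    then have "content_ideal R (R.poly_mult p q)
        = g ` (content_ideal S (map h p) \<cdot>\<^bsub>S\<^esub> content_ideal S (map h q))"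
      using content_retract[OF R.polynomial_incl[OF pq]] by simp
    also have "\<dots> = content_ideal R p \<cdot> content_ideal R q"
      using g.image_ideal_prod[OF content_ideal[OF R.polynomial_incl[OF p]]
          content_ideal[OF R.polynomial_incl[OF q]]]
        content_retract[OF R.polynomial_incl[OF p]] content_retract[OF R.polynomial_incl[OF q]]
      by simp
    finally show "content_ideal R (p \<otimes>\<^bsub>univ_poly R (carrier R)\<^esub> q) = content_ideal R p \<cdot> content_ideal R q"
      by (simp add: univ_poly_mult)
  qed (rule assms(1))
qed

lemma RDirProd_simps:
  "(a, b) \<otimes>\<^bsub>RDirProd R S\<^esub> (c, d) = (a \<otimes>\<^bsub>R\<^esub> c, b \<otimes>\<^bsub>S\<^esub> d)"
  "(a, b) \<oplus>\<^bsub>RDirProd R S\<^esub> (c, d) = (a \<oplus>\<^bsub>R\<^esub> c, b \<oplus>\<^bsub>S\<^esub> d)"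
  "\<zero>\<^bsub>RDirProd R S\<^esub> = (\<zero>\<^bsub>R\<^esub>, \<zero>\<^bsub>S\<^esub>)"
  "\<one>\<^bsub>RDirProd R S\<^esub> = (\<one>\<^bsub>R\<^esub>, \<one>\<^bsub>S\<^esub>)"
  by (simp_all add: RDirProd_def DirProd_def monoid.defs)

lemma RDirProd_a_inv:
  assumes "ring R" and "ring S" and "a \<in> carrier R" and "b \<in> carrier S"
  shows "\<ominus>\<^bsub>RDirProd R S\<^esub> (a, b) = (\<ominus>\<^bsub>R\<^esub> a, \<ominus>\<^bsub>S\<^esub> b)"
  unfolding a_inv_def RDirProd_add_monoid
  using assms by (intro inv_DirProd) (simp_all add: abelian_group.a_group ring.is_abelian_group)

lemma amalg_dup_simps:
  "(a, b) \<otimes>\<^bsub>amalg_dup R I\<^esub> (c, d) = (a \<otimes>\<^bsub>R\<^esub> c, b \<otimes>\<^bsub>R\<^esub> d)"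
  "(a, b) \<oplus>\<^bsub>amalg_dup R I\<^esub> (c, d) = (a \<oplus>\<^bsub>R\<^esub> c, b \<oplus>\<^bsub>R\<^esub> d)"
  "\<zero>\<^bsub>amalg_dup R I\<^esub> = (\<zero>\<^bsub>R\<^esub>, \<zero>\<^bsub>R\<^esub>)"
  "\<one>\<^bsub>amalg_dup R I\<^esub> = (\<one>\<^bsub>R\<^esub>, \<one>\<^bsub>R\<^esub>)"
  by (simp_all add: amalg_dup_def RDirProd_simps)

context cring
begin

lemma amalg_dup_carrier_iff:
  assumes "ideal I R"
  shows "(a, b) \<in> carrier (amalg_dup R I) \<longleftrightarrow> a \<in> carrier R \<and> b \<in> carrier R \<and> b \<ominus> a \<in> I"
proof -
  have "(a, b) \<in> carrier (amalg_dup R I) \<longleftrightarrow> a \<in> carrier R \<and> (\<exists>i \<in> I. b = a \<oplus> i)"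
    unfolding amalg_dup_def by auto
  also have "\<dots> \<longleftrightarrow> a \<in> carrier R \<and> b \<in> carrier R \<and> b \<ominus> a \<in> I"
  proof safe
    fix i assume "a \<in> carrier R" "i \<in> I"
    moreover have "i \<in> carrier R" using ideal.Icarr[OF assms \<open>i \<in> I\<close>] .
    moreover have "a \<oplus> i \<ominus> a = i" using calculation by algebra
    ultimately show "a \<oplus> i \<in> carrier R" "a \<oplus> i \<ominus> a \<in> I" by simp_all
  next
    assume "a \<in> carrier R" "b \<in> carrier R" "b \<ominus> a \<in> I"
    moreover from calculation have "b = a \<oplus> (b \<ominus> a)" by algebra
    ultimately show "\<exists>i \<in> I. b = a \<oplus> i" by blast
  qed
  finally show ?thesis .
qed

lemma amalg_dup_cring:
  assumes "ideal I R"
  shows "cring (amalg_dup R I)"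
proof -
  let ?P = "RDirProd R R" and ?D = "carrier (amalg_dup R I)"
  interpret P: ring ?P using RDirProd_ring[OF ring_axioms ring_axioms] .
  interpret I: ideal I R by fact
  note D_iff = amalg_dup_carrier_iff[OF assms]
  have D_sub: "?D \<subseteq> carrier ?P" using D_iff by (auto simp: RDirProd_carrier)
  have "\<one>\<^bsub>?P\<^esub> \<in> ?D" using D_iff by (simp add: RDirProd_simps minus_eq r_neg)
  moreover have "\<ominus>\<^bsub>?P\<^esub> (a, b) \<in> ?D" if "(a, b) \<in> ?D" for a b
  proof -
    from that have ab: "a \<in> carrier R" "b \<in> carrier R" "b \<ominus> a \<in> I" using D_iff by auto
    have "\<ominus> b \<ominus> \<ominus> a = \<ominus> (b \<ominus> a)" using ab by algebra
    then show ?thesis using ab D_iff by (simp add: RDirProd_a_inv ring_axioms)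
  qed
  moreover have "(a, b) \<otimes>\<^bsub>?P\<^esub> (c, d) \<in> ?D" and "(a, b) \<oplus>\<^bsub>?P\<^esub> (c, d) \<in> ?D"
    if "(a, b) \<in> ?D" and "(c, d) \<in> ?D" for a b c d
  proof -
    from that have ab: "a \<in> carrier R" "b \<in> carrier R" "b \<ominus> a \<in> I"
      and cd: "c \<in> carrier R" "d \<in> carrier R" "d \<ominus> c \<in> I" using D_iff by auto
    have "b \<otimes> d \<ominus> a \<otimes> c = b \<otimes> (d \<ominus> c) \<oplus> (b \<ominus> a) \<otimes> c" using ab cd by algebra
    then show "(a, b) \<otimes>\<^bsub>?P\<^esub> (c, d) \<in> ?D"
      using ab cd D_iff by (simp add: RDirProd_simps I.I_l_closed I.I_r_closed)
    have "(b \<oplus> d) \<ominus> (a \<oplus> c) = (b \<ominus> a) \<oplus> (d \<ominus> c)" using ab cd by algebra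
    then show "(a, b) \<oplus>\<^bsub>?P\<^esub> (c, d) \<in> ?D"
      using ab cd D_iff by (simp add: RDirProd_simps)
  qed
  moreover have "x \<otimes>\<^bsub>?P\<^esub> y = y \<otimes>\<^bsub>?P\<^esub> x" if "x \<in> ?D" "y \<in> ?D" for x y
    using that D_iff by (cases x, cases y) (simp add: RDirProd_simps m_comm)
  ultimately have "subcring ?D ?P"
    by (intro P.subcringI P.subringI D_sub) auto
  then have "cring (?P\<lparr>carrier := ?D\<rparr>)" using P.subcring_iff[OF D_sub] by blast
  moreover have "?P\<lparr>carrier := ?D\<rparr> = amalg_dup R I" unfolding amalg_dup_def by simp
  ultimately show ?thesis by simp
qed

lemma amalg_dup_diag_mem:
  assumes "ideal I R" and "a \<in> carrier R"
  shows "(a, a) \<in> carrier (amalg_dup R I)"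
proof -
  interpret ideal I R by fact
  show ?thesis using assms(2) by (simp add: amalg_dup_carrier_iff[OF assms(1)] minus_eq r_neg)
qed

lemma amalg_dup_gaussian_imp_gaussian:
  assumes "ideal I R" and "gaussian_ring (amalg_dup R I)"
  shows "gaussian_ring R"
proof -
  have D: "ring (amalg_dup R I)" using amalg_dup_cring[OF assms(1)] cring.axioms(1) by blast
  have "ring_hom_ring R (amalg_dup R I) (\<lambda>a. (a, a))"
    using ring_axioms D
    by (intro ring_hom_ringI2 ring_hom_memI) (auto simp: amalg_dup_simps amalg_dup_diag_mem assms(1))
  moreover have "fst \<in> ring_hom (amalg_dup R I) R"
    by (intro ring_hom_memI) (auto simp: amalg_dup_simps amalg_dup_carrier_iff assms(1))
  ultimately show ?thesis
    using ring_hom_ring.gaussian_ring_retract is_cring assms(2) by fastforce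
qed

lemma amalg_dup_Units:
  assumes "ideal I R" and ab: "(a, b) \<in> carrier (amalg_dup R I)" and "a \<in> Units R" "b \<in> Units R"
  shows "(a, b) \<in> Units (amalg_dup R I)"
proof -
  interpret I: ideal I R by fact
  have a: "a \<in> carrier R" "inv a \<in> carrier R" "a \<otimes> inv a = \<one>" "inv a \<otimes> a = \<one>"
    and b: "b \<in> carrier R" "inv b \<in> carrier R" "b \<otimes> inv b = \<one>" "inv b \<otimes> b = \<one>"
    using assms(3,4) by (simp_all add: Units_closed)
  have "inv b \<ominus> inv a = (a \<otimes> inv a) \<otimes> inv b \<ominus> (b \<otimes> inv b) \<otimes> inv a"
    using a b by simp
  also have "\<dots> = \<ominus> (b \<ominus> a) \<otimes> (inv a \<otimes> inv b)"
    using a(1,2) b(1,2) by algebra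
  finally have "inv b \<ominus> inv a \<in> I"
    using ab a b by (simp add: amalg_dup_carrier_iff assms(1) I.I_r_closed)
  then have "(inv a, inv b) \<in> carrier (amalg_dup R I)"
    using a b by (simp add: amalg_dup_carrier_iff assms(1))
  with ab a b show ?thesis
    unfolding Units_def by (force simp: amalg_dup_simps)
qed

lemma amalg_dup_zero_divisors_mem:
  assumes Z: "ideal (zero_divisors R) R"
    and ab: "(a, b) \<in> carrier (amalg_dup R (zero_divisors R))" and a: "a \<in> zero_divisors R"
  shows "(a, b) \<in> zero_divisors (amalg_dup R (zero_divisors R))"
proof -
  interpret Z: ideal "zero_divisors R" R by (rule Z)
  note D_iff = amalg_dup_carrier_iff[OF Z]
  have b: "b \<in> carrier R" "b \<ominus> a \<in> zero_divisors R" using ab D_iff by auto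
  have "\<exists>y \<in> carrier (amalg_dup R (zero_divisors R)). y \<noteq> (\<zero>, \<zero>) \<and> (a \<otimes> fst y, b \<otimes> snd y) = (\<zero>, \<zero>)"
  proof (cases "b = \<zero>")
    case True
    from a obtain z where z: "z \<in> carrier R" "z \<noteq> \<zero>" "a \<otimes> z = \<zero>"
      unfolding zero_divisors_def by blast
    with True show ?thesis using amalg_dup_diag_mem[OF Z z(1)] by force
  next
    case False
    have "b = a \<oplus> (b \<ominus> a)" using a b(1) Z.Icarr by algebra
    then have "b \<in> zero_divisors R" using a b(2) by (metis Z.a_closed)
    then obtain z where z: "z \<in> carrier R" "z \<noteq> \<zero>" "b \<otimes> z = \<zero>"
      unfolding zero_divisors_def by blast
    have "z \<in> zero_divisors R"
      using z b(1) False m_comm unfolding zero_divisors_def by auto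
    then have "(\<zero>, z) \<in> carrier (amalg_dup R (zero_divisors R))"
      using z(1) D_iff by (simp add: minus_eq)
    with z a Z.Icarr show ?thesis by force
  qed
  then show ?thesis
    using ab unfolding zero_divisors_def by (force simp: amalg_dup_simps)
qed

lemma amalg_dup_regular_imp_Units:
  assumes local: "local_ring R (zero_divisors R)"
    and x: "regular_elem (amalg_dup R (zero_divisors R)) x"
  shows "x \<in> Units (amalg_dup R (zero_divisors R))"
proof -
  have Z: "ideal (zero_divisors R) R"
    using local unfolding local_ring_def by (blast intro: maximalideal.axioms(1))
  interpret Z: ideal "zero_divisors R" R by (rule Z)
  obtain a b where ab: "x = (a, b)" "(a, b) \<in> carrier (amalg_dup R (zero_divisors R))"
    and not_zd: "(a, b) \<notin> zero_divisors (amalg_dup R (zero_divisors R))"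
    using x unfolding regular_elem_def by (cases x) auto
  have carr: "a \<in> carrier R" "b \<in> carrier R" "b \<ominus> a \<in> zero_divisors R"
    using ab(2) amalg_dup_carrier_iff[OF Z] by auto
  have a: "a \<notin> zero_divisors R" using amalg_dup_zero_divisors_mem[OF Z ab(2)] not_zd by blast
  have "a = b \<ominus> (b \<ominus> a)" using carr(1,2) by algebra
  then have b: "b \<notin> zero_divisors R"
    using a carr(3) by (metis Z.a_closed Z.a_inv_closed minus_eq)
  show ?thesis
    unfolding ab(1) using amalg_dup_Units[OF Z ab(2)] a b carr(1,2) local_ring_Units_iff[OF local] by blast
qed

end

theorem mainTheorem9:
  fixes A :: "('a, 'b) ring_scheme" and m :: "'a set"
  assumes "cring A"
    and "local_ring A m"
    and "prufer_ring A"
    and "\<not> gaussian_ring A"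
    and "m = zero_divisors A"
  shows "prufer_ring (amalg_dup A m) \<and> \<not> gaussian_ring (amalg_dup A m)"
proof -
  interpret cring A by fact
  have m_ideal: "ideal m A"
    using assms(2) unfolding local_ring_def by (blast intro: maximalideal.axioms(1))
  have local_Z: "local_ring A (zero_divisors A)" using assms(2,5) by simp
  have "prufer_ring (amalg_dup A (zero_divisors A))"
    using amalg_dup_cring[OF m_ideal[unfolded assms(5)]]
    by (rule cring.prufer_ringI_regular_Units) (rule amalg_dup_regular_imp_Units[OF local_Z])
  then have "prufer_ring (amalg_dup A m)" by (simp only: assms(5))
  moreover have "\<not> gaussian_ring (amalg_dup A m)"
    using amalg_dup_gaussian_imp_gaussian[OF m_ideal] assms(4) by blast
  ultimately show ?thesis ..
qed

end
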